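(* Let $\mathbb B$ be a separable uniformly convex Banach space with dual $\mathbb B^*$, and let $T>0$. Let $(u_n)$ be a bounded sequence in $L^1(\Omega;C([0,T];\mathbb B))$ and $u\in L^1(\Omega;C([0,T];\mathbb B))$ such that $$\lim_{n\to\infty}\mathbb E\Big(\sup_{t\in[0,T]}|\langle\phi,u_n(t)-u(t)\rangle|\Big)=0\ \ \forall\phi\in\mathbb B^*,\qquad \lim_{n\to\infty}\mathbb E\Big(\sup_{t\in[0,T]}\big|\|u_n(t)\|_{\mathbb B}-\|u(t)\|_{\mathbb B}\big|\Big)=0.$$ Then $\sup_{t\in[0,T]}\|u_n(t)-u(t)\|_{\mathbb B}\to0$ in probability as $n\to\infty$.
   Context: $(\Omega,\mathcal F,P)$ is a probability space; $\langle\cdot,\cdot\rangle$ is the duality pairing between $\mathbb B^*$ and $\mathbb B$. *)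

theory Defs
  imports "HOL-Probability.Probability"
begin

definition uniformly_convex :: "'b::real_normed_vector itself \<Rightarrow> bool" where
  "uniformly_convex (_::'b itself) \<longleftrightarrow>
     (\<forall>e>0. \<exists>d>0. \<forall>x y::'b. norm x \<le> 1 \<and> norm y \<le> 1 \<and> norm (x - y) \<ge> e
        \<longrightarrow> norm ((1/2) *\<^sub>R (x + y)) \<le> 1 - d)"

text \<open>Elements of C([0,T];B), represented as bounded continuous functions on the reals that
  are constant outside [0,T] (i.e. f t = f (clamp t)). This subspace of the bcontfun space is
  isometric to C([0,T];B) with the sup norm.\<close>
definition in_CT :: "real \<Rightarrow> (real \<Rightarrow>\<^sub>C 'b::real_normed_vector) \<Rightarrow> bool" where
  "in_CT T f \<longleftrightarrow> (\<forall>t. apply_bcontfun f t = apply_bcontfun f (max 0 (min T t)))"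

end

theory Submission
  imports Defs
begin

text \<open>
  Fix \<open>e > 0\<close> and a tolerance \<open>\<rho> > 0\<close>. Up to probability \<open>\<rho>\<close>, the path \<open>v(\<omega>)\<close> stays in a
  fixed ball of radius \<open>m\<close> and within distance \<open>\<gamma>\<close> of the first \<open>N\<close> points of a dense
  sequence \<open>(d\<^sub>k)\<close> of \<open>\<bbbB>\<close> (separability plus compactness of the path). Choose for every \<open>d\<^sub>k\<close> a
  norming functional \<open>\<phi>\<^sub>k\<close> (Hahn--Banach). Uniform convexity gives a quantitative stability:
  if \<open>\<parallel>w - d\<parallel> < \<gamma>\<close>, \<open>|\<phi>(a - w)| < \<gamma>\<close> and \<open>|\<parallel>a\<parallel> - \<parallel>w\<parallel>| < \<gamma>\<close> for a norming \<open>\<phi>\<close> of \<open>d\<close>, then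
  \<open>\<parallel>a - w\<parallel> \<le> e\<close>. Hence \<open>sup\<^sub>t \<parallel>u\<^sub>n(t) - v(t)\<parallel> > e\<close> forces one of finitely many events
  \<open>sup\<^sub>t |\<phi>\<^sub>k(u\<^sub>n(t) - v(t))| \<ge> \<gamma>\<close> (\<open>k \<le> N\<close>) or \<open>sup\<^sub>t |\<parallel>u\<^sub>n(t)\<parallel> - \<parallel>v(t)\<parallel>| \<ge> \<gamma>\<close>, whose
  probabilities tend to zero by Markov's inequality and the two hypotheses.
\<close>

text \<open>A \<^emph>\<open>dominated graph\<close> is a linear subspace of \<open>\<bbbB> \<times> \<real>\<close> lying below the graph of the norm;
  it is the graph of a linear functional, dominated by the norm, on a subspace of \<open>\<bbbB>\<close>.\<close>

definition dominated_graph :: "('b::real_normed_vector \<times> real) set \<Rightarrow> bool" where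
  "dominated_graph G \<longleftrightarrow> subspace G \<and> (\<forall>(x, a)\<in>G. a \<le> norm x)"

lemma dominated_graph_unique:
  assumes "dominated_graph G" "(x, a) \<in> G" "(x, b) \<in> G"
  shows "a = b"
proof -
  have sub: "subspace G" using assms(1) by (simp add: dominated_graph_def)
  have "(x, a) - (x, b) \<in> G" "(x, b) - (x, a) \<in> G"
    using subspace_diff[OF sub assms(2,3)] subspace_diff[OF sub assms(3,2)] by simp_all
  then have "a - b \<le> 0" "b - a \<le> 0"
    using assms(1) unfolding dominated_graph_def by fastforce+
  then show ?thesis by simp
qed

text \<open>The value \<open>c\<close> for a new point \<open>x\<close> must separate the two families of bounds
  forced by domination; they are compatible by the triangle inequality.\<close>

lemma dominated_graph_extension_constant:
  assumes G: "dominated_graph G"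
  obtains c where "\<And>y b. (y, b) \<in> G \<Longrightarrow> b - norm (y - x) \<le> c"
    and "\<And>z b. (z, b) \<in> G \<Longrightarrow> c \<le> norm (z + x) - b"
proof -
  have sep: "b - norm (y - x) \<le> norm (z + x) - b'" if "(y, b) \<in> G" "(z, b') \<in> G" for y b z b'
  proof -
    have "(y, b) + (z, b') \<in> G"
      using G that subspace_add[of G "(y, b)" "(z, b')"] by (simp only: dominated_graph_def)
    then have "b + b' \<le> norm (y + z)" using G by (auto simp: dominated_graph_def)
    also have "\<dots> \<le> norm (y - x) + norm (z + x)"
      using norm_triangle_ineq[of "y - x" "z + x"] by simp
    finally show ?thesis by simp
  qed
  define S where "S = (\<lambda>(y, b). b - norm (y - x)) ` G"
  have "(0, 0) \<in> G" using G subspace_0[of G] by (simp add: dominated_graph_def zero_prod_def)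
  then have "S \<noteq> {}" and "bdd_above S"
    using sep unfolding S_def by (auto intro!: bdd_aboveI[where M = "norm (0 + x) - 0"])
  show ?thesis
  proof (rule that[of "Sup S"])
    show "b - norm (y - x) \<le> Sup S" if "(y, b) \<in> G" for y b
      using that \<open>bdd_above S\<close> by (intro cSup_upper) (auto simp: S_def)
    show "Sup S \<le> norm (z + x) - b" if "(z, b) \<in> G" for z b
      using \<open>S \<noteq> {}\<close> sep that by (intro cSup_least) (auto simp: S_def)
  qed
qed

lemma dominated_graph_extend:
  assumes G: "dominated_graph G" and x: "x \<notin> fst ` G"
  shows "\<exists>G'. dominated_graph G' \<and> G \<subset> G'"
proof -
  have sub: "subspace G" and dom: "\<And>y b. (y, b) \<in> G \<Longrightarrow> b \<le> norm y"
    using G by (auto simp: dominated_graph_def)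
  have scale: "(r *\<^sub>R y, r * b) \<in> G" if "(y, b) \<in> G" for r y b
    using subspace_scale[OF sub that, of r] by simp
  obtain c where c_lower: "\<And>y b. (y, b) \<in> G \<Longrightarrow> b - norm (y - x) \<le> c"
    and c_upper: "\<And>z b. (z, b) \<in> G \<Longrightarrow> c \<le> norm (z + x) - b"
    using dominated_graph_extension_constant[OF G] by blast
  define G' where "G' = {g + h | g h. g \<in> G \<and> h \<in> span {(x, c)}}"
  have "subspace G'" unfolding G'_def by (intro subspace_sums sub subspace_span)
  moreover have "b + t * c \<le> norm (y + t *\<^sub>R x)" if yb: "(y, b) \<in> G" for y b t
  proof (cases t "0::real" rule: linorder_cases)
    case less
    \<comment> \<open>rescale to the point \<open>(y/|t|, b/|t|)\<close> of \<open>G\<close> and use the lower bound for \<open>c\<close>\<close>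
    define s where "s = - t"
    have s: "s > 0" using less by (simp add: s_def)
    have "(1/s) * b - norm ((1/s) *\<^sub>R y - x) \<le> c" using c_lower[OF scale[OF yb]] .
    then have "s * ((1/s) * b - norm ((1/s) *\<^sub>R y - x)) \<le> s * c" using s by simp
    then have "b - norm (s *\<^sub>R ((1/s) *\<^sub>R y - x)) \<le> s * c"
      using s by (simp add: right_diff_distrib)
    moreover have "s *\<^sub>R ((1/s) *\<^sub>R y - x) = y + t *\<^sub>R x"
      using s by (simp add: s_def scaleR_diff_right)
    ultimately have "b - s * c \<le> norm (y + t *\<^sub>R x)" by simp
    then show ?thesis by (simp add: s_def)
  next
    case equal
    then show ?thesis using dom[OF yb] by simp
  next
    case greater
    \<comment> \<open>rescale to the point \<open>(y/t, b/t)\<close> of \<open>G\<close> and use the upper bound for \<open>c\<close>\<close>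
    have "c \<le> norm ((1/t) *\<^sub>R y + x) - (1/t) * b" using c_upper[OF scale[OF yb]] .
    then have "t * c \<le> t * (norm ((1/t) *\<^sub>R y + x) - (1/t) * b)" using greater by simp
    also have "\<dots> = norm (t *\<^sub>R ((1/t) *\<^sub>R y + x)) - b"
      using greater by (simp add: right_diff_distrib)
    also have "t *\<^sub>R ((1/t) *\<^sub>R y + x) = y + t *\<^sub>R x"
      using greater by (simp add: scaleR_add_right)
    finally show ?thesis by simp
  qed
  then have "\<forall>(z, a)\<in>G'. a \<le> norm z" by (auto simp: G'_def span_singleton)
  moreover have "G \<subseteq> G'"
  proof
    fix g assume "g \<in> G"
    then have "g + 0 \<in> G'" unfolding G'_def using span_zero by blast
    then show "g \<in> G'" by simp
  qed
  moreover have "0 + (x, c) \<in> G'"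
    unfolding G'_def using subspace_0[OF sub] span_base[of "(x, c)"] by blast
  then have "G \<noteq> G'" using x by (metis add_0 fst_conv image_eqI)
  ultimately show ?thesis unfolding dominated_graph_def by blast
qed

lemma subspace_Union_chain:
  assumes "C \<noteq> {}" and sub: "\<And>X. X \<in> C \<Longrightarrow> subspace X"
    and chain: "\<And>X Y. X \<in> C \<Longrightarrow> Y \<in> C \<Longrightarrow> X \<subseteq> Y \<or> Y \<subseteq> X"
  shows "subspace (\<Union>C)"
  unfolding subspace_def
proof (intro conjI ballI allI)
  show "0 \<in> \<Union>C" using assms(1) sub subspace_0 by blast
next
  fix p q assume "p \<in> \<Union>C" "q \<in> \<Union>C"
  then obtain X Y where "X \<in> C" "Y \<in> C" "p \<in> X" "q \<in> Y" by blast
  with sub chain show "p + q \<in> \<Union>C" by (metis UnionI subsetD subspace_add)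
next
  fix r p assume "p \<in> \<Union>C"
  with sub show "r *\<^sub>R p \<in> \<Union>C" using subspace_scale by blast
qed

lemma functional_of_total_dominated_graph:
  assumes G: "dominated_graph G" and total: "\<And>x. \<exists>a. (x, a) \<in> G"
  obtains \<phi> where "bounded_linear \<phi>" "\<And>x. \<bar>\<phi> x\<bar> \<le> norm x" "\<And>x. (x, \<phi> x) \<in> G"
proof -
  have sub: "subspace G" using G by (simp add: dominated_graph_def)
  define \<phi> where "\<phi> x = (SOME a. (x, a) \<in> G)" for x
  have graph: "(x, \<phi> x) \<in> G" for x unfolding \<phi>_def using total[of x] by (rule someI_ex)
  have graph_unique: "\<phi> x = a" if "(x, a) \<in> G" for x a
    using dominated_graph_unique[OF G graph that] .
  have add: "\<phi> (x + y) = \<phi> x + \<phi> y" for x y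
    using graph_unique subspace_add[OF sub graph graph, of x y] by simp
  have scale: "\<phi> (r *\<^sub>R x) = r *\<^sub>R \<phi> x" for r x
    using graph_unique subspace_scale[OF sub graph, of r x] by simp
  have "\<phi> x \<le> norm x" for x using G graph by (auto simp: dominated_graph_def)
  moreover have "\<phi> (- x) = - \<phi> x" for x using scale[of "-1" x] by simp
  ultimately have bound: "\<bar>\<phi> x\<bar> \<le> norm x" for x by (metis abs_le_iff norm_minus_cancel)
  have "bounded_linear \<phi>"
    by (rule bounded_linear_intro[where K = 1]) (use add scale bound in auto)
  with bound graph show ?thesis using that by blast
qed

definition norming_functional :: "('b::real_normed_vector \<Rightarrow> real) \<Rightarrow> 'b \<Rightarrow> bool" where
  "norming_functional \<phi> d \<longleftrightarrow> bounded_linear \<phi> \<and> (\<forall>x. \<bar>\<phi> x\<bar> \<le> norm x) \<and> \<phi> d = norm d"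

text \<open>Every vector has a norming functional: by Zorn a maximal dominated graph through
  \<open>(d, \<parallel>d\<parallel>)\<close> is defined everywhere, by the one-step extension.\<close>

lemma norming_functional_exists: "\<exists>\<phi>. norming_functional \<phi> (d::'b::real_normed_vector)"
proof -
  define G0 :: "('b \<times> real) set" where "G0 = span {(d, norm d)}"
  have "\<forall>(x, a)\<in>G0. a \<le> norm x"
    by (auto simp: G0_def span_singleton intro: mult_right_mono)
  then have "dominated_graph G0" by (simp add: dominated_graph_def G0_def)
  let ?A = "{G. dominated_graph G \<and> G0 \<subseteq> G}"
  have "\<exists>M\<in>?A. \<forall>X\<in>?A. M \<subseteq> X \<longrightarrow> X = M"
  proof (rule subset_Zorn_nonempty)
    show "?A \<noteq> {}" using \<open>dominated_graph G0\<close> by blast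
    fix C assume "C \<noteq> {}" "subset.chain ?A C"
    then have "C \<subseteq> ?A" and chain: "\<And>X Y. X \<in> C \<Longrightarrow> Y \<in> C \<Longrightarrow> X \<subseteq> Y \<or> Y \<subseteq> X"
      unfolding subset_chain_def by blast+
    then have C: "\<And>X. X \<in> C \<Longrightarrow> dominated_graph X \<and> G0 \<subseteq> X" by auto
    have "subspace (\<Union>C)"
    proof (rule subspace_Union_chain[OF \<open>C \<noteq> {}\<close> _ chain])
      show "subspace X" if "X \<in> C" for X using C[OF that] by (simp add: dominated_graph_def)
    qed
    moreover have "\<forall>(x, a)\<in>\<Union>C. a \<le> norm x"
    proof clarify
      fix x a X assume "X \<in> C" "(x, a) \<in> X"
      then show "a \<le> norm x" using C unfolding dominated_graph_def by auto
    qed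
    moreover have "G0 \<subseteq> \<Union>C" using C \<open>C \<noteq> {}\<close> by blast
    ultimately show "\<Union>C \<in> ?A" by (simp add: dominated_graph_def)
  qed
  then obtain M where "M \<in> ?A" and maximal: "\<forall>X\<in>?A. M \<subseteq> X \<longrightarrow> X = M" ..
  then have M: "dominated_graph M" "G0 \<subseteq> M" by simp_all
  have "\<exists>a. (x, a) \<in> M" for x
  proof (rule ccontr)
    assume "\<nexists>a. (x, a) \<in> M"
    then have "x \<notin> fst ` M" by force
    then obtain G' where "dominated_graph G'" "M \<subset> G'"
      using dominated_graph_extend[OF M(1)] by blast
    then have "G' \<in> ?A" using M(2) by blast
    with maximal \<open>M \<subset> G'\<close> show False by blast
  qed
  then obtain \<phi> where \<phi>: "bounded_linear \<phi>" "\<And>x. \<bar>\<phi> x\<bar> \<le> norm x" "\<And>x. (x, \<phi> x) \<in> M"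
    using functional_of_total_dominated_graph[OF M(1)] by blast
  have "(d, norm d) \<in> M" using M(2) span_base[of "(d, norm d)"] by (auto simp: G0_def)
  then have "\<phi> d = norm d" using dominated_graph_unique[OF M(1) \<phi>(3)] by blast
  with \<phi> show ?thesis unfolding norming_functional_def by blast
qed

text \<open>If \<open>\<phi>\<close> norms \<open>d\<close> and \<open>a\<close> is almost as short as \<open>d\<close> but \<open>\<phi> a\<close> is almost \<open>\<parallel>d\<parallel>\<close>,
  then the midpoint of \<open>a\<close> and \<open>d\<close> is almost as long as they are, so by uniform convexity
  \<open>a\<close> is close to \<open>d\<close>; the closeness is uniform on bounded sets.\<close>

lemma uniformly_convex_norming_estimate:
  assumes uc: "uniformly_convex TYPE('b::real_normed_vector)" and \<epsilon>: "\<epsilon> > 0" and R: "R \<ge> 0"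
  obtains \<eta> where "\<eta> > 0"
    and "\<And>(a::'b) d \<phi>. norming_functional \<phi> d \<Longrightarrow> norm d \<le> R \<Longrightarrow> norm a \<le> norm d + \<eta>
           \<Longrightarrow> \<phi> a \<ge> norm d - \<eta> \<Longrightarrow> norm (a - d) \<le> \<epsilon>"
proof -
  define e where "e = \<epsilon> / (R + 1)"
  have e: "e > 0" using \<epsilon> R by (simp add: e_def)
  then obtain \<delta> where \<delta>: "\<delta> > 0" and convex: "\<forall>x y::'b. norm x \<le> 1 \<and> norm y \<le> 1 \<and>
      norm (x - y) \<ge> e \<longrightarrow> norm ((1/2) *\<^sub>R (x + y)) \<le> 1 - \<delta>"
    using uc unfolding uniformly_convex_def by blast
  define \<eta> where "\<eta> = min 1 (\<delta> * \<epsilon> / 6)"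
  have \<eta>: "\<eta> > 0" "\<eta> \<le> 1" "\<eta> \<le> \<delta> * \<epsilon> / 6" using \<delta> \<epsilon> by (auto simp: \<eta>_def)
  have estimate: "norm (a - d) \<le> \<epsilon>"
    if \<phi>: "norming_functional \<phi> d" and dR: "norm d \<le> R"
      and na: "norm a \<le> norm d + \<eta>" and \<phi>a: "\<phi> a \<ge> norm d - \<eta>" for a d :: 'b and \<phi>
  proof -
    interpret \<phi>: bounded_linear \<phi> using \<phi> by (simp add: norming_functional_def)
    define r where "r = norm d + \<eta>"
    have r: "r > 0" using \<eta> by (simp add: r_def add_nonneg_pos)
    show ?thesis
    proof (cases "r \<le> \<epsilon> / 2")
      case True
      have "norm (a - d) \<le> norm a + norm d" by (rule norm_triangle_ineq4)
      also have "\<dots> \<le> 2 * r" using na \<eta> unfolding r_def by simp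
      finally show ?thesis using True by simp
    next
      case False
      \<comment> \<open>\<open>a/r\<close> and \<open>d/r\<close> lie in the unit ball and their midpoint has norm close to one\<close>
      define x where "x = (1/r) *\<^sub>R a"
      define y where "y = (1/r) *\<^sub>R d"
      have nx: "norm x \<le> 1" and ny: "norm y \<le> 1"
        using na r \<eta> by (simp_all add: x_def y_def divide_le_eq_1_pos r_def)
      have "\<phi> ((1/2) *\<^sub>R (x + y)) = (\<phi> a + \<phi> d) / (2 * r)"
        by (simp add: x_def y_def \<phi>.scaleR \<phi>.add add_divide_distrib)
      also have "\<dots> \<ge> (2 * norm d - \<eta>) / (2 * r)"
        using \<phi>a \<phi> r by (intro divide_right_mono) (auto simp: norming_functional_def)
      also have "(2 * norm d - \<eta>) / (2 * r) = 1 - 3 * \<eta> / (2 * r)"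
        using r by (simp add: r_def field_simps)
      finally have "\<phi> ((1/2) *\<^sub>R (x + y)) \<ge> 1 - 3 * \<eta> / (2 * r)" .
      moreover have "3 * \<eta> / (2 * r) \<le> 3 * \<eta> / \<epsilon>"
        using False \<epsilon> \<eta> by (intro divide_left_mono) auto
      moreover have "3 * \<eta> / \<epsilon> \<le> \<delta> / 2" using \<eta> \<epsilon> by (simp add: pos_divide_le_eq)
      moreover have "\<phi> ((1/2) *\<^sub>R (x + y)) \<le> norm ((1/2) *\<^sub>R (x + y))"
        using \<phi> unfolding norming_functional_def by (meson abs_le_D1)
      ultimately have "norm ((1/2) *\<^sub>R (x + y)) > 1 - \<delta>" using \<delta> by linarith
      then have "norm (x - y) < e" using convex nx ny by force
      moreover have "x - y = (1/r) *\<^sub>R (a - d)" by (simp add: x_def y_def scaleR_diff_right)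
      ultimately have "norm (a - d) < e * r" using r by (simp add: pos_divide_less_eq)
      also have "e * r \<le> e * (R + 1)" using e dR \<eta> by (intro mult_left_mono) (auto simp: r_def)
      also have "\<dots> = \<epsilon>" using R by (simp add: e_def)
      finally show ?thesis by simp
    qed
  qed
  show ?thesis by (rule that[OF \<eta>(1) estimate])
qed

lemma uniformly_convex_stability:
  assumes uc: "uniformly_convex TYPE('b::real_normed_vector)" and \<epsilon>: "\<epsilon> > 0" and R: "R \<ge> 0"
  obtains \<gamma> where "\<gamma> > 0"
    and "\<And>(a::'b) w d \<phi>. norming_functional \<phi> d \<Longrightarrow> norm w \<le> R \<Longrightarrow> norm (w - d) < \<gamma>
           \<Longrightarrow> \<bar>\<phi> (a - w)\<bar> < \<gamma> \<Longrightarrow> \<bar>norm a - norm w\<bar> < \<gamma> \<Longrightarrow> norm (a - w) \<le> \<epsilon>"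
proof -
  obtain \<eta> where \<eta>: "\<eta> > 0" and estimate: "\<And>(a::'b) d \<phi>. norming_functional \<phi> d
      \<Longrightarrow> norm d \<le> R + 1 \<Longrightarrow> norm a \<le> norm d + \<eta> \<Longrightarrow> \<phi> a \<ge> norm d - \<eta>
      \<Longrightarrow> norm (a - d) \<le> \<epsilon> / 2"
    using uniformly_convex_norming_estimate[OF uc, of "\<epsilon> / 2" "R + 1"] \<epsilon> R by auto
  define \<gamma> where "\<gamma> = min (\<eta> / 2) (min (\<epsilon> / 2) 1)"
  have \<gamma>: "\<gamma> > 0" "2 * \<gamma> \<le> \<eta>" "\<gamma> \<le> \<epsilon> / 2" "\<gamma> \<le> 1"
    using \<eta> \<epsilon> by (auto simp: \<gamma>_def)
  have close: "norm (a - w) \<le> \<epsilon>"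
    if \<phi>: "norming_functional \<phi> d" and w: "norm w \<le> R" and wd: "norm (w - d) < \<gamma>"
      and \<phi>aw: "\<bar>\<phi> (a - w)\<bar> < \<gamma>" and aw: "\<bar>norm a - norm w\<bar> < \<gamma>" for a w d :: 'b and \<phi>
  proof -
    interpret \<phi>: bounded_linear \<phi> using \<phi> by (simp add: norming_functional_def)
    have \<phi>wd: "\<bar>\<phi> (w - d)\<bar> < \<gamma>"
      using \<phi> wd unfolding norming_functional_def by (meson le_less_trans)
    have "\<bar>norm w - norm d\<bar> < \<gamma>" using norm_triangle_ineq3[of w d] wd by linarith
    then have "norm d \<le> R + 1" and "norm a \<le> norm d + \<eta>" using w aw \<gamma> by linarith+
    moreover have "\<phi> a \<ge> norm d - \<eta>"
      using \<phi>aw \<phi>wd \<phi> \<gamma> by (simp add: \<phi>.diff norming_functional_def abs_less_iff)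
    ultimately have "norm (a - d) \<le> \<epsilon> / 2" using estimate[OF \<phi>] by blast
    then have "norm (a - w) \<le> \<epsilon> / 2 + \<gamma>"
      using norm_triangle_ineq[of "a - d" "d - w"] wd by (simp add: norm_minus_commute)
    then show ?thesis using \<gamma> by simp
  qed
  show ?thesis by (rule that[OF \<gamma>(1) close])
qed

lemma continuous_bcontfun_eval:
  "continuous_on UNIV (\<lambda>f::'c::metric_space \<Rightarrow>\<^sub>C 'b::metric_space. apply_bcontfun f t)"
proof (rule lipschitz_on_continuous_on)
  show "1-lipschitz_on UNIV (\<lambda>f::'c \<Rightarrow>\<^sub>C 'b. apply_bcontfun f t)"
    by (rule lipschitz_onI) (auto simp: dist_bounded)
qed

lemma measurable_bcontfun_eval:
  fixes f :: "'a \<Rightarrow> ('c::metric_space \<Rightarrow>\<^sub>C 'b::metric_space)"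
  assumes "f \<in> borel_measurable M" and "continuous_on UNIV h"
  shows "(\<lambda>\<omega>. h (apply_bcontfun (f \<omega>) t)) \<in> borel_measurable M"
proof -
  have "continuous_on UNIV (\<lambda>g::'c \<Rightarrow>\<^sub>C 'b. h (apply_bcontfun g t))"
    using continuous_on_compose2[OF assms(2) continuous_bcontfun_eval[of t]] by simp
  with assms(1) show ?thesis using borel_measurable_continuous_on by blast
qed

lemma bdd_above_continuous_Icc:
  fixes f :: "real \<Rightarrow> real"
  assumes "continuous_on {a..b} f"
  shows "bdd_above (f ` {a..b})"
  using compact_continuous_image[OF assms compact_Icc] by (simp add: bounded_imp_bdd_above compact_imp_bounded)

lemma SUP_closure_eq:
  fixes f :: "'c::topological_space \<Rightarrow> real"
  assumes "D \<noteq> {}" and cont: "continuous_on (closure D) f" and bdd: "bdd_above (f ` closure D)"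
  shows "(SUP x\<in>closure D. f x) = (SUP x\<in>D. f x)"
proof (rule antisym)
  have bddD: "bdd_above (f ` D)" using bdd closure_subset by (meson bdd_above_mono image_mono)
  have "f ` closure D \<subseteq> {..(SUP x\<in>D. f x)}"
    using bddD by (intro image_closure_subset[OF cont]) (auto intro: cSUP_upper)
  then show "(SUP x\<in>closure D. f x) \<le> (SUP x\<in>D. f x)"
    using \<open>D \<noteq> {}\<close> closure_subset by (intro cSUP_least) auto
  show "(SUP x\<in>D. f x) \<le> (SUP x\<in>closure D. f x)"
    using \<open>D \<noteq> {}\<close> bdd closure_subset by (intro cSUP_subset_mono) auto
qed

lemma closure_Icc_rationals:
  fixes a b :: real
  assumes "a < b"
  shows "closure ({a..b} \<inter> \<rat>) = {a..b}"
  using assms by (simp add: closure_convex_Int_superset Rats_closure_real)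

text \<open>The supremum over \<open>[a, b]\<close> of a family of random continuous functions is measurable,
  because it is a supremum over the countable set of rational times.\<close>

lemma borel_measurable_SUP_Icc:
  fixes F :: "'a \<Rightarrow> real \<Rightarrow> real"
  assumes "a < b"
    and meas: "\<And>t. (\<lambda>\<omega>. F \<omega> t) \<in> borel_measurable M"
    and cont: "\<And>\<omega>. continuous_on {a..b} (F \<omega>)"
  shows "(\<lambda>\<omega>. SUP t\<in>{a..b}. F \<omega> t) \<in> borel_measurable M"
proof -
  have "{a..b} \<inter> \<rat> \<noteq> {}" using closure_Icc_rationals[OF \<open>a < b\<close>] \<open>a < b\<close> by auto
  then have "(SUP t\<in>{a..b}. F \<omega> t) = (SUP t\<in>{a..b} \<inter> \<rat>. F \<omega> t)" for \<omega>
    using SUP_closure_eq[of "{a..b} \<inter> \<rat>" "F \<omega>"] closure_Icc_rationals[OF \<open>a < b\<close>]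
      cont bdd_above_continuous_Icc by auto
  moreover have "countable ({a..b} \<inter> \<rat>)" by (meson countable_rat countable_subset inf_le2)
  then have "(\<lambda>\<omega>. SUP t\<in>{a..b} \<inter> \<rat>. F \<omega> t) \<in> borel_measurable M"
    using meas bdd_above_continuous_Icc[OF cont]
    by (intro borel_measurable_cSUP) (auto intro: bdd_above_mono[OF _ image_mono[OF inf_le1]])
  ultimately show ?thesis by simp
qed

lemma integrable_SUP_Icc:
  fixes F :: "'a \<Rightarrow> real \<Rightarrow> real"
  assumes "a < b"
    and meas: "\<And>t. (\<lambda>\<omega>. F \<omega> t) \<in> borel_measurable M"
    and cont: "\<And>\<omega>. continuous_on {a..b} (F \<omega>)"
    and nonneg: "\<And>\<omega> t. 0 \<le> F \<omega> t"
    and bound: "\<And>\<omega> t. t \<in> {a..b} \<Longrightarrow> F \<omega> t \<le> B \<omega>" and B: "integrable M B"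
  shows "integrable M (\<lambda>\<omega>. SUP t\<in>{a..b}. F \<omega> t)"
proof (rule Bochner_Integration.integrable_bound[OF B])
  show "(\<lambda>\<omega>. SUP t\<in>{a..b}. F \<omega> t) \<in> borel_measurable M"
    by (rule borel_measurable_SUP_Icc[OF \<open>a < b\<close> meas cont])
  have "0 \<le> (SUP t\<in>{a..b}. F \<omega> t)" and "(SUP t\<in>{a..b}. F \<omega> t) \<le> B \<omega>" for \<omega>
    using \<open>a < b\<close> nonneg[of \<omega> a] bound
    by (auto intro!: cSUP_upper2[OF bdd_above_continuous_Icc[OF cont], of a] cSUP_least)
  then have "norm (SUP t\<in>{a..b}. F \<omega> t) \<le> norm (B \<omega>)" for \<omega>
    by (metis abs_ge_self abs_of_nonneg order_trans real_norm_def)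
  then show "AE \<omega> in M. norm (SUP t\<in>{a..b}. F \<omega> t) \<le> norm (B \<omega>)" by simp
qed

lemma measure_ge_tendsto_zero_of_integral:
  fixes f :: "nat \<Rightarrow> 'a \<Rightarrow> real"
  assumes int: "\<And>n. integrable M (f n)" and nonneg: "\<And>n \<omega>. 0 \<le> f n \<omega>"
    and lim: "(\<lambda>n. \<integral>\<omega>. f n \<omega> \<partial>M) \<longlonglongrightarrow> 0" and "\<gamma> > 0"
  shows "(\<lambda>n. measure M {\<omega>\<in>space M. f n \<omega> \<ge> \<gamma>}) \<longlonglongrightarrow> 0"
proof (rule tendsto_sandwich[OF _ _ tendsto_const])
  show "\<forall>\<^sub>F n in sequentially. measure M {\<omega>\<in>space M. f n \<omega> \<ge> \<gamma>} \<le> (\<integral>\<omega>. f n \<omega> \<partial>M) / \<gamma>"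
    using \<open>\<gamma> > 0\<close> nonneg
    by (intro always_eventually allI integral_Markov_inequality_measure[OF int, where A = "space M"]) auto
  show "(\<lambda>n. (\<integral>\<omega>. f n \<omega> \<partial>M) / \<gamma>) \<longlonglongrightarrow> 0"
    using tendsto_divide_zero[OF lim] .
qed simp

lemma (in finite_measure) measure_decseq_tendsto_zero:
  assumes "range A \<subseteq> sets M" "decseq A" "(\<Inter>n. A n) = {}"
  shows "(\<lambda>n. measure M (A n)) \<longlonglongrightarrow> 0"
  using finite_Lim_measure_decseq[OF assms(1,2)] assms(3) by simp

lemma (in finite_measure) measure_Un_tendsto_zero:
  assumes "\<And>n. A n \<in> sets M" "\<And>n. B n \<in> sets M"
    and "(\<lambda>n. measure M (A n)) \<longlonglongrightarrow> 0" "(\<lambda>n. measure M (B n)) \<longlonglongrightarrow> 0"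
  shows "(\<lambda>n. measure M (A n \<union> B n)) \<longlonglongrightarrow> 0"
proof (rule tendsto_sandwich[OF _ _ tendsto_const])
  show "\<forall>\<^sub>F n in sequentially. measure M (A n \<union> B n) \<le> measure M (A n) + measure M (B n)"
    using assms(1,2) by (intro always_eventually allI measure_Un_le) auto
  show "(\<lambda>n. measure M (A n) + measure M (B n)) \<longlonglongrightarrow> 0"
    using tendsto_add[OF assms(3,4)] by simp
qed simp

lemma (in finite_measure) measure_UN_tendsto_zero:
  assumes "finite I" "\<And>i n. i \<in> I \<Longrightarrow> A i n \<in> sets M"
    and "\<And>i. i \<in> I \<Longrightarrow> (\<lambda>n. measure M (A i n)) \<longlonglongrightarrow> 0"
  shows "(\<lambda>n. measure M (\<Union>i\<in>I. A i n)) \<longlonglongrightarrow> 0"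
proof (rule tendsto_sandwich[OF _ _ tendsto_const])
  show "\<forall>\<^sub>F n in sequentially. measure M (\<Union>i\<in>I. A i n) \<le> (\<Sum>i\<in>I. measure M (A i n))"
    using assms(1,2) by (intro always_eventually allI finite_measure_subadditive_finite) auto
  show "(\<lambda>n. \<Sum>i\<in>I. measure M (A i n)) \<longlonglongrightarrow> 0"
    using assms(3) by (rule tendsto_null_sum)
qed simp

lemma (in finite_measure) measure_tendsto_zero_by_cover:
  assumes cover: "\<And>\<rho>. \<rho> > 0 \<Longrightarrow> \<exists>A D. A \<in> sets M \<and> measure M A < \<rho> \<and> (\<forall>n. D n \<in> sets M)
      \<and> (\<lambda>n. measure M (D n)) \<longlonglongrightarrow> 0 \<and> (\<forall>n. E n \<subseteq> A \<union> D n)"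
  shows "(\<lambda>n. measure M (E n)) \<longlonglongrightarrow> 0"
proof (rule order_tendstoI)
  fix \<rho> :: real assume "\<rho> > 0"
  then obtain A D where A: "A \<in> sets M" "measure M A < \<rho> / 2" and D: "\<And>n. D n \<in> sets M"
    and lim: "(\<lambda>n. measure M (D n)) \<longlonglongrightarrow> 0" and E: "\<And>n. E n \<subseteq> A \<union> D n"
    using cover[of "\<rho> / 2"] by auto
  have "\<rho> / 2 > 0" using \<open>\<rho> > 0\<close> by simp
  then have "\<forall>\<^sub>F n in sequentially. measure M (D n) < \<rho> / 2"
    by (rule order_tendstoD(2)[OF lim])
  then show "\<forall>\<^sub>F n in sequentially. measure M (E n) < \<rho>"
  proof eventually_elim
    case (elim n)
    have "measure M (E n) \<le> measure M (A \<union> D n)" using E A D by (intro finite_measure_mono) auto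
    also have "\<dots> \<le> measure M A + measure M (D n)" using A D by (intro measure_Un_le) auto
    finally show ?case using A elim by simp
  qed
next
  fix \<rho> :: real assume "\<rho> < 0"
  then show "\<forall>\<^sub>F n in sequentially. \<rho> < measure M (E n)"
    by (intro always_eventually allI) (meson less_le_trans measure_nonneg)
qed

lemma separable_dense_sequence:
  assumes "separable_space (euclidean :: 'b::metric_space topology)"
  obtains ds :: "nat \<Rightarrow> 'b::metric_space" where "\<And>x \<epsilon>. \<epsilon> > 0 \<Longrightarrow> \<exists>k. dist (ds k) x < \<epsilon>"
proof -
  obtain C :: "'b set" where C: "countable C" "closure C = UNIV"
    using assms unfolding separable_space_def by auto
  then have "C \<noteq> {}" by auto
  have "\<exists>k. dist (from_nat_into C k) x < \<epsilon>" if "\<epsilon> > 0" for x \<epsilon>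
  proof -
    obtain y where "y \<in> C" "dist y x < \<epsilon>"
      using closure_approachable[of x C] C(2) \<open>\<epsilon> > 0\<close> by auto
    then show ?thesis using from_nat_into_surj[OF C(1)] by metis
  qed
  then show ?thesis by (rule that)
qed

lemma finite_net_covers_compact:
  fixes ds :: "nat \<Rightarrow> 'b::metric_space"
  assumes dense: "\<And>x \<epsilon>. \<epsilon> > 0 \<Longrightarrow> \<exists>k. dist (ds k) x < \<epsilon>" and "compact K" and "\<gamma> > 0"
  obtains N where "\<And>x. x \<in> K \<Longrightarrow> infdist x (ds ` {..N}) < \<gamma>"
proof -
  have "K \<subseteq> (\<Union>k. ball (ds k) \<gamma>)" using dense[OF \<open>\<gamma> > 0\<close>] by auto
  then obtain I where "finite I" and I: "K \<subseteq> (\<Union>k\<in>I. ball (ds k) \<gamma>)"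
    using compactE_image[OF \<open>compact K\<close>, of UNIV "\<lambda>k. ball (ds k) \<gamma>"] by auto
  define N where "N = Max (insert 0 I)"
  have "infdist x (ds ` {..N}) < \<gamma>" if "x \<in> K" for x
  proof -
    obtain k where "k \<in> I" "dist (ds k) x < \<gamma>" using I \<open>x \<in> K\<close> by auto
    moreover have "k \<le> N" using \<open>finite I\<close> \<open>k \<in> I\<close> by (simp add: N_def)
    ultimately show ?thesis using infdist_le[of "ds k" "ds ` {..N}" x] by (simp add: dist_commute)
  qed
  then show ?thesis by (rule that)
qed

lemma separable_norming_sequence:
  assumes "separable_space (euclidean :: 'b::real_normed_vector topology)"
  obtains ds :: "nat \<Rightarrow> 'b::real_normed_vector" and \<phi>
  where "\<And>x \<epsilon>. \<epsilon> > 0 \<Longrightarrow> \<exists>k. dist (ds k) x < \<epsilon>"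
    and "\<And>k. norming_functional (\<phi> k) (ds k)"
proof -
  obtain ds :: "nat \<Rightarrow> 'b" where dense: "\<And>x \<epsilon>. \<epsilon> > 0 \<Longrightarrow> \<exists>k. dist (ds k) x < \<epsilon>"
    using separable_dense_sequence[OF assms] by auto
  have "\<exists>\<phi>. \<forall>k. norming_functional (\<phi> k) (ds k)"
    using norming_functional_exists by (intro choice) blast
  then obtain \<phi> where "\<forall>k. norming_functional (\<phi> k) (ds k)" ..
  then have "\<And>k. norming_functional (\<phi> k) (ds k)" by blast
  with dense show ?thesis by (rule that)
qed

lemma SUP_Icc_less_imp_less:
  fixes f :: "real \<Rightarrow> real"
  assumes "continuous_on {a..b} f" "(SUP t\<in>{a..b}. f t) < \<gamma>" "t \<in> {a..b}"
  shows "f t < \<gamma>"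
  using cSUP_upper[OF assms(3) bdd_above_continuous_Icc[OF assms(1)]] assms(2) by simp

lemma path_close_from_net:
  fixes f g :: "real \<Rightarrow>\<^sub>C 'b::real_normed_vector" and ds :: "nat \<Rightarrow> 'b"
  assumes stable: "\<And>(a::'b) w d \<psi>. norming_functional \<psi> d \<Longrightarrow> norm w \<le> R \<Longrightarrow> norm (w - d) < \<gamma>
           \<Longrightarrow> \<bar>\<psi> (a - w)\<bar> < \<gamma> \<Longrightarrow> \<bar>norm a - norm w\<bar> < \<gamma> \<Longrightarrow> norm (a - w) \<le> \<epsilon>"
    and norming: "\<And>k. norming_functional (\<phi> k) (ds k)"
    and "norm g \<le> R"
    and net: "(SUP t\<in>{a..b}. infdist (g t) (ds ` {..N})) < \<gamma>"
    and functionals: "\<And>k. k \<le> N \<Longrightarrow> (SUP t\<in>{a..b}. \<bar>\<phi> k (f t - g t)\<bar>) < \<gamma>"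
    and norms: "(SUP t\<in>{a..b}. \<bar>norm (f t) - norm (g t)\<bar>) < \<gamma>"
    and t: "t \<in> {a..b}"
  shows "norm (f t - g t) \<le> \<epsilon>"
proof -
  have "infdist (g t) (ds ` {..N}) < \<gamma>"
    by (rule SUP_Icc_less_imp_less[OF _ net t]) (intro continuous_intros continuous_on_apply_bcontfun)
  then have "(INF k\<in>{..N}. dist (g t) (ds k)) < \<gamma>" by (simp add: infdist_notempty image_image)
  then obtain k where k: "k \<le> N" "dist (g t) (ds k) < \<gamma>"
    by (subst (asm) cINF_less_iff) (auto intro: bdd_belowI[where m = 0])
  have "bounded_linear (\<phi> k)" using norming[of k] by (simp add: norming_functional_def)
  then have "continuous_on {a..b} (\<lambda>t. \<bar>\<phi> k (f t - g t)\<bar>)"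
    by (intro continuous_on_rabs bounded_linear.continuous_on[of "\<phi> k"] continuous_on_diff
        continuous_on_apply_bcontfun)
  then have "\<bar>\<phi> k (f t - g t)\<bar> < \<gamma>"
    using functionals[OF k(1)] t by (rule SUP_Icc_less_imp_less)
  moreover have "\<bar>norm (f t) - norm (g t)\<bar> < \<gamma>"
    by (rule SUP_Icc_less_imp_less[OF _ norms t]) (intro continuous_intros continuous_on_apply_bcontfun)
  moreover have "norm (g t) \<le> R" using norm_bounded[of g t] \<open>norm g \<le> R\<close> by simp
  ultimately show ?thesis using stable[OF norming[of k]] k(2) by (simp add: dist_norm)
qed

locale weak_norm_convergence = prob_space M
  for M :: "'a measure" and T :: real
    and u :: "nat \<Rightarrow> 'a \<Rightarrow> (real \<Rightarrow>\<^sub>C 'b::real_normed_vector)" and v :: "'a \<Rightarrow> (real \<Rightarrow>\<^sub>C 'b)" +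
  assumes T_pos: "T > 0"
    and u_meas: "\<And>n. u n \<in> borel_measurable M"
    and u_int: "\<And>n. integrable M (\<lambda>\<omega>. norm (u n \<omega>))"
    and v_meas: "v \<in> borel_measurable M"
    and v_int: "integrable M (\<lambda>\<omega>. norm (v \<omega>))"
    and weak_conv: "\<And>\<phi>. bounded_linear (\<phi> :: 'b \<Rightarrow> real) \<Longrightarrow>
           (\<lambda>n. \<integral>\<omega>. (SUP t\<in>{0..T}. \<bar>\<phi> (u n \<omega> t - v \<omega> t)\<bar>) \<partial>M) \<longlonglongrightarrow> 0"
    and norm_conv: "(\<lambda>n. \<integral>\<omega>. (SUP t\<in>{0..T}. \<bar>norm (u n \<omega> t) - norm (v \<omega> t)\<bar>) \<partial>M) \<longlonglongrightarrow> 0"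
begin

definition functional_deviation :: "('b \<Rightarrow> real) \<Rightarrow> nat \<Rightarrow> 'a \<Rightarrow> real" where
  "functional_deviation \<phi> n \<omega> = (SUP t\<in>{0..T}. \<bar>\<phi> (u n \<omega> t - v \<omega> t)\<bar>)"

definition norm_deviation :: "nat \<Rightarrow> 'a \<Rightarrow> real" where
  "norm_deviation n \<omega> = (SUP t\<in>{0..T}. \<bar>norm (u n \<omega> t) - norm (v \<omega> t)\<bar>)"

definition net_distance :: "(nat \<Rightarrow> 'b) \<Rightarrow> nat \<Rightarrow> 'a \<Rightarrow> real" where
  "net_distance ds N \<omega> = (SUP t\<in>{0..T}. infdist (v \<omega> t) (ds ` {..N}))"

text \<open>The integrable function \<open>\<parallel>u n\<parallel> + \<parallel>v\<parallel>\<close> dominates, up to a constant, every pathwise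
  quantity below.\<close>

lemma integrable_norm_bound: "integrable M (\<lambda>\<omega>. norm (u n \<omega>) + norm (v \<omega>))"
  using u_int v_int by (rule Bochner_Integration.integrable_add)

lemma
  assumes \<phi>: "bounded_linear \<phi>"
  shows functional_deviation_measurable: "functional_deviation \<phi> n \<in> borel_measurable M"
    and functional_deviation_tendsto: "\<gamma> > 0 \<Longrightarrow>
      (\<lambda>n. prob {\<omega>\<in>space M. functional_deviation \<phi> n \<omega> \<ge> \<gamma>}) \<longlonglongrightarrow> 0"
proof -
  interpret \<phi>: bounded_linear \<phi> by (fact \<phi>)
  obtain K where "K > 0" and K: "\<And>x. norm (\<phi> x) \<le> norm x * K" using \<phi>.pos_bounded by blast
  have meas: "(\<lambda>\<omega>. \<bar>\<phi> (u n \<omega> t - v \<omega> t)\<bar>) \<in> borel_measurable M" for n t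
  proof -
    have "(\<lambda>\<omega>. \<bar>\<phi> (u n \<omega> t) - \<phi> (v \<omega> t)\<bar>) \<in> borel_measurable M"
      using measurable_bcontfun_eval[OF u_meas \<phi>.continuous_on[OF continuous_on_id]]
        measurable_bcontfun_eval[OF v_meas \<phi>.continuous_on[OF continuous_on_id]] by measurable
    then show ?thesis by (simp add: \<phi>.diff)
  qed
  have cont: "continuous_on {0..T} (\<lambda>t. \<bar>\<phi> (u n \<omega> t - v \<omega> t)\<bar>)" for n \<omega>
    by (intro continuous_on_rabs \<phi>.continuous_on continuous_on_diff continuous_on_apply_bcontfun)
  have bound: "\<bar>\<phi> (u n \<omega> t - v \<omega> t)\<bar> \<le> K * (norm (u n \<omega>) + norm (v \<omega>))" for n \<omega> t
  proof -
    have "norm (u n \<omega> t - v \<omega> t) \<le> norm (u n \<omega>) + norm (v \<omega>)"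
      using norm_triangle_ineq4[of "u n \<omega> t" "v \<omega> t"] norm_bounded[of "u n \<omega>" t]
        norm_bounded[of "v \<omega>" t] by linarith
    then have "norm (u n \<omega> t - v \<omega> t) * K \<le> (norm (u n \<omega>) + norm (v \<omega>)) * K"
      using \<open>K > 0\<close> by (intro mult_right_mono) auto
    then show ?thesis using K[of "u n \<omega> t - v \<omega> t"] by (simp add: mult.commute)
  qed
  show "functional_deviation \<phi> n \<in> borel_measurable M"
    unfolding functional_deviation_def by (rule borel_measurable_SUP_Icc[OF T_pos meas cont])
  show "(\<lambda>n. prob {\<omega>\<in>space M. functional_deviation \<phi> n \<omega> \<ge> \<gamma>}) \<longlonglongrightarrow> 0" if "\<gamma> > 0"
    unfolding functional_deviation_def
  proof (rule measure_ge_tendsto_zero_of_integral[OF _ _ weak_conv[OF \<phi>] that])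
    show "integrable M (\<lambda>\<omega>. SUP t\<in>{0..T}. \<bar>\<phi> (u n \<omega> t - v \<omega> t)\<bar>)" for n
      using integrable_norm_bound
      by (intro integrable_SUP_Icc[OF T_pos meas cont abs_ge_zero bound]) auto
    show "0 \<le> (SUP t\<in>{0..T}. \<bar>\<phi> (u n \<omega> t - v \<omega> t)\<bar>)" for n \<omega>
      using T_pos by (intro cSUP_upper2[OF bdd_above_continuous_Icc[OF cont], of 0]) auto
  qed
qed

lemma
  shows norm_deviation_measurable: "norm_deviation n \<in> borel_measurable M"
    and norm_deviation_tendsto: "\<gamma> > 0 \<Longrightarrow>
      (\<lambda>n. prob {\<omega>\<in>space M. norm_deviation n \<omega> \<ge> \<gamma>}) \<longlonglongrightarrow> 0"
proof -
  have meas: "(\<lambda>\<omega>. \<bar>norm (u n \<omega> t) - norm (v \<omega> t)\<bar>) \<in> borel_measurable M" for n t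
    using measurable_bcontfun_eval[OF u_meas continuous_on_norm_id]
      measurable_bcontfun_eval[OF v_meas continuous_on_norm_id] by measurable
  have cont: "continuous_on {0..T} (\<lambda>t. \<bar>norm (u n \<omega> t) - norm (v \<omega> t)\<bar>)" for n \<omega>
    by (intro continuous_intros continuous_on_apply_bcontfun)
  have bound: "\<bar>norm (u n \<omega> t) - norm (v \<omega> t)\<bar> \<le> norm (u n \<omega>) + norm (v \<omega>)" for n \<omega> t
    using norm_bounded[of "u n \<omega>" t] norm_bounded[of "v \<omega>" t] norm_ge_zero[of "u n \<omega> t"]
      norm_ge_zero[of "v \<omega> t"] by linarith
  show "norm_deviation n \<in> borel_measurable M"
    unfolding norm_deviation_def by (rule borel_measurable_SUP_Icc[OF T_pos meas cont])
  show "(\<lambda>n. prob {\<omega>\<in>space M. norm_deviation n \<omega> \<ge> \<gamma>}) \<longlonglongrightarrow> 0" if "\<gamma> > 0"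
    unfolding norm_deviation_def
  proof (rule measure_ge_tendsto_zero_of_integral[OF _ _ norm_conv that])
    show "integrable M (\<lambda>\<omega>. SUP t\<in>{0..T}. \<bar>norm (u n \<omega> t) - norm (v \<omega> t)\<bar>)" for n
      by (rule integrable_SUP_Icc[OF T_pos meas cont abs_ge_zero bound integrable_norm_bound])
    show "0 \<le> (SUP t\<in>{0..T}. \<bar>norm (u n \<omega> t) - norm (v \<omega> t)\<bar>)" for n \<omega>
      using T_pos by (intro cSUP_upper2[OF bdd_above_continuous_Icc[OF cont], of 0]) auto
  qed
qed

lemma norm_tail_small:
  assumes "\<rho> > 0"
  obtains m :: nat where "prob {\<omega>\<in>space M. norm (v \<omega>) \<ge> m} < \<rho>"
proof -
  define A where "A m = {\<omega>\<in>space M. norm (v \<omega>) \<ge> real m}" for m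
  have "range A \<subseteq> sets M"
    using borel_measurable_continuous_on[OF continuous_on_norm_id v_meas] by (auto simp: A_def)
  moreover have "decseq A" by (auto simp: decseq_def A_def)
  moreover have "(\<Inter>m. A m) = {}"
    by (auto simp: A_def) (meson reals_Archimedean2 not_le)
  ultimately have "\<forall>\<^sub>F m in sequentially. prob (A m) < \<rho>"
    using measure_decseq_tendsto_zero order_tendstoD(2) \<open>\<rho> > 0\<close> by blast
  then show ?thesis using that by (auto simp: A_def eventually_sequentially)
qed

lemma net_distance_measurable: "net_distance ds N \<in> borel_measurable M"
  unfolding net_distance_def
proof (rule borel_measurable_SUP_Icc[OF T_pos])
  show "(\<lambda>\<omega>. infdist (v \<omega> t) (ds ` {..N})) \<in> borel_measurable M" for t
    by (rule measurable_bcontfun_eval[OF v_meas]) (intro continuous_intros)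
  show "continuous_on {0..T} (\<lambda>t. infdist (v \<omega> t) (ds ` {..N}))" for \<omega>
    by (intro continuous_on_infdist continuous_on_apply_bcontfun)
qed

text \<open>Since each path of \<open>v\<close> is compact, with high probability it is uniformly close to a
  finite initial segment of a dense sequence.\<close>

lemma net_distance_small:
  assumes dense: "\<And>x \<epsilon>. \<epsilon> > 0 \<Longrightarrow> \<exists>k. dist (ds k) x < \<epsilon>" and "\<gamma> > 0" "\<rho> > 0"
  obtains N where "prob {\<omega>\<in>space M. net_distance ds N \<omega> \<ge> \<gamma>} < \<rho>"
proof -
  define A where "A N = {\<omega>\<in>space M. net_distance ds N \<omega> \<ge> \<gamma>}" for N
  have bdd: "bdd_above ((\<lambda>t. infdist (v \<omega> t) (ds ` {..N})) ` {0..T})" for \<omega> N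
    by (intro bdd_above_continuous_Icc continuous_on_infdist continuous_on_apply_bcontfun)
  have "range A \<subseteq> sets M" using net_distance_measurable by (auto simp: A_def)
  moreover have "decseq A"
  proof (rule decseq_SucI)
    have "net_distance ds (Suc N) \<omega> \<le> net_distance ds N \<omega>" for N \<omega>
      unfolding net_distance_def using T_pos bdd
      by (intro cSUP_mono) (auto intro!: bexI infdist_mono)
    then show "A (Suc N) \<subseteq> A N" for N by (auto simp: A_def intro: order_trans)
  qed
  moreover have "\<exists>N. \<omega> \<notin> A N" for \<omega>
  proof -
    have path: "compact (v \<omega> ` {0..T})"
      by (intro compact_continuous_image continuous_on_apply_bcontfun compact_Icc)
    have half: "\<gamma> / 2 > 0" using \<open>\<gamma> > 0\<close> by simp
    obtain N where N: "\<And>x. x \<in> v \<omega> ` {0..T} \<Longrightarrow> infdist x (ds ` {..N}) < \<gamma> / 2"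
      using finite_net_covers_compact[OF dense path half] by auto
    have "net_distance ds N \<omega> \<le> \<gamma> / 2"
      unfolding net_distance_def using T_pos N by (intro cSUP_least) (auto intro: less_imp_le)
    then have "\<omega> \<notin> A N" using \<open>\<gamma> > 0\<close> by (simp add: A_def)
    then show ?thesis ..
  qed
  then have "(\<Inter>N. A N) = {}" by blast
  ultimately have "\<forall>\<^sub>F N in sequentially. prob (A N) < \<rho>"
    using measure_decseq_tendsto_zero order_tendstoD(2) \<open>\<rho> > 0\<close> by blast
  then show ?thesis using that by (auto simp: A_def eventually_sequentially)
qed

lemma event_measurable:
  shows "{\<omega>\<in>space M. norm (v \<omega>) \<ge> R} \<in> sets M"
    and "{\<omega>\<in>space M. net_distance ds N \<omega> \<ge> \<gamma>} \<in> sets M"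
    and "bounded_linear \<phi> \<Longrightarrow> {\<omega>\<in>space M. functional_deviation \<phi> n \<omega> \<ge> \<gamma>} \<in> sets M"
    and "{\<omega>\<in>space M. norm_deviation n \<omega> \<ge> \<gamma>} \<in> sets M"
  using borel_measurable_continuous_on[OF continuous_on_norm_id v_meas] net_distance_measurable
    functional_deviation_measurable norm_deviation_measurable by measurable

lemma deviation_cover:
  assumes stable: "\<And>(a::'b) w d \<psi>. norming_functional \<psi> d \<Longrightarrow> norm w \<le> R \<Longrightarrow> norm (w - d) < \<gamma>
           \<Longrightarrow> \<bar>\<psi> (a - w)\<bar> < \<gamma> \<Longrightarrow> \<bar>norm a - norm w\<bar> < \<gamma> \<Longrightarrow> norm (a - w) \<le> e"
    and norming: "\<And>k. norming_functional (\<phi> k) (ds k)"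
  shows "{\<omega>\<in>space M. (SUP t\<in>{0..T}. norm (u n \<omega> t - v \<omega> t)) > e} \<subseteq>
    ({\<omega>\<in>space M. norm (v \<omega>) \<ge> R} \<union> {\<omega>\<in>space M. net_distance ds N \<omega> \<ge> \<gamma>}) \<union>
    ((\<Union>k\<in>{..N}. {\<omega>\<in>space M. functional_deviation (\<phi> k) n \<omega> \<ge> \<gamma>})
      \<union> {\<omega>\<in>space M. norm_deviation n \<omega> \<ge> \<gamma>})"
proof (rule subsetI, rule ccontr)
  fix \<omega> assume \<omega>: "\<omega> \<in> {\<omega>\<in>space M. (SUP t\<in>{0..T}. norm (u n \<omega> t - v \<omega> t)) > e}"
  assume "\<omega> \<notin> ({\<omega>\<in>space M. norm (v \<omega>) \<ge> R} \<union> {\<omega>\<in>space M. net_distance ds N \<omega> \<ge> \<gamma>}) \<union>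
    ((\<Union>k\<in>{..N}. {\<omega>\<in>space M. functional_deviation (\<phi> k) n \<omega> \<ge> \<gamma>})
      \<union> {\<omega>\<in>space M. norm_deviation n \<omega> \<ge> \<gamma>})"
  with \<omega> have small: "norm (v \<omega>) \<le> R" "net_distance ds N \<omega> < \<gamma>"
    "\<And>k. k \<le> N \<Longrightarrow> functional_deviation (\<phi> k) n \<omega> < \<gamma>" "norm_deviation n \<omega> < \<gamma>"
    by (auto simp: not_le)
  have "norm (u n \<omega> t - v \<omega> t) \<le> e" if "t \<in> {0..T}" for t
    by (rule path_close_from_net[where N = N, OF stable norming small(1) _ _ _ that])
      (use small in \<open>simp_all add: net_distance_def functional_deviation_def norm_deviation_def\<close>)
  then have "(SUP t\<in>{0..T}. norm (u n \<omega> t - v \<omega> t)) \<le> e"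
    using T_pos by (intro cSUP_least) auto
  with \<omega> show False by simp
qed

text \<open>The main result in the locale: cover the bad event by the events of
  \<open>deviation_cover\<close>, with \<open>m\<close>, \<open>\<gamma>\<close> and \<open>N\<close> chosen so that the fixed part has probability
  below \<open>\<rho>\<close>, while the moving part vanishes as \<open>n \<rightarrow> \<infinity>\<close>.\<close>

theorem uniform_convergence_in_probability:
  assumes separable: "separable_space (euclidean :: 'b topology)"
    and uc: "uniformly_convex TYPE('b)" and "e > 0"
  shows "(\<lambda>n. prob {\<omega>\<in>space M. (SUP t\<in>{0..T}. norm (u n \<omega> t - v \<omega> t)) > e}) \<longlonglongrightarrow> 0"
proof (rule measure_tendsto_zero_by_cover)
  obtain ds :: "nat \<Rightarrow> 'b" and \<phi> where dense: "\<And>x \<epsilon>. \<epsilon> > 0 \<Longrightarrow> \<exists>k. dist (ds k) x < \<epsilon>"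
    and norming: "\<And>k. norming_functional (\<phi> k) (ds k)"
    using separable_norming_sequence[OF separable] by auto
  fix \<rho> :: real assume "\<rho> > 0"
  then have "\<rho> / 2 > 0" by simp
  then obtain m :: nat where m: "prob {\<omega>\<in>space M. norm (v \<omega>) \<ge> m} < \<rho> / 2"
    by (rule norm_tail_small)
  obtain \<gamma> where "\<gamma> > 0" and stable: "\<And>(a::'b) w d \<psi>. norming_functional \<psi> d \<Longrightarrow> norm w \<le> m
      \<Longrightarrow> norm (w - d) < \<gamma> \<Longrightarrow> \<bar>\<psi> (a - w)\<bar> < \<gamma> \<Longrightarrow> \<bar>norm a - norm w\<bar> < \<gamma>
      \<Longrightarrow> norm (a - w) \<le> e"
    using uniformly_convex_stability[OF uc \<open>e > 0\<close>, of m] by auto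
  obtain N where N: "prob {\<omega>\<in>space M. net_distance ds N \<omega> \<ge> \<gamma>} < \<rho> / 2"
    using net_distance_small[OF dense \<open>\<gamma> > 0\<close> \<open>\<rho> / 2 > 0\<close>] by auto
  have bl: "bounded_linear (\<phi> k)" for k using norming by (simp add: norming_functional_def)
  let ?A = "{\<omega>\<in>space M. norm (v \<omega>) \<ge> m} \<union> {\<omega>\<in>space M. net_distance ds N \<omega> \<ge> \<gamma>}"
  let ?D = "\<lambda>n. (\<Union>k\<in>{..N}. {\<omega>\<in>space M. functional_deviation (\<phi> k) n \<omega> \<ge> \<gamma>})
      \<union> {\<omega>\<in>space M. norm_deviation n \<omega> \<ge> \<gamma>}"
  note meas_v = event_measurable(1)[where R = m]
    and meas_net = event_measurable(2)[where ds = ds and N = N and \<gamma> = \<gamma>]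
    and meas_fun = event_measurable(3)[OF bl, where \<gamma> = \<gamma>]
    and meas_norm = event_measurable(4)[where \<gamma> = \<gamma>]
  have "prob ?A \<le> prob {\<omega>\<in>space M. norm (v \<omega>) \<ge> m} + prob {\<omega>\<in>space M. net_distance ds N \<omega> \<ge> \<gamma>}"
    by (rule measure_Un_le[OF meas_v meas_net])
  then have "prob ?A < \<rho>" using m N by linarith
  moreover have "(\<lambda>n. prob (?D n)) \<longlonglongrightarrow> 0"
    using meas_fun meas_norm functional_deviation_tendsto[OF bl \<open>\<gamma> > 0\<close>] norm_deviation_tendsto[OF \<open>\<gamma> > 0\<close>]
    by (intro measure_Un_tendsto_zero measure_UN_tendsto_zero) auto
  moreover have "{\<omega>\<in>space M. (SUP t\<in>{0..T}. norm (u n \<omega> t - v \<omega> t)) > e} \<subseteq> ?A \<union> ?D n" for n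
    by (rule deviation_cover[OF stable norming])
  ultimately show "\<exists>A D. A \<in> sets M \<and> prob A < \<rho> \<and> (\<forall>n. D n \<in> sets M) \<and> (\<lambda>n. prob (D n)) \<longlonglongrightarrow> 0
      \<and> (\<forall>n. {\<omega>\<in>space M. (SUP t\<in>{0..T}. norm (u n \<omega> t - v \<omega> t)) > e} \<subseteq> A \<union> D n)"
    using meas_v meas_net meas_fun meas_norm by (intro exI[of _ ?A] exI[of _ ?D]) auto
qed

end

theorem mainTheorem7:
  fixes M :: "'a measure"
    and T :: real
    and u :: "nat \<Rightarrow> 'a \<Rightarrow> (real \<Rightarrow>\<^sub>C 'b::banach)"
    and v :: "'a \<Rightarrow> (real \<Rightarrow>\<^sub>C 'b)"
  assumes "prob_space M"
    and "separable_space (euclidean :: 'b topology)"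
    and "uniformly_convex TYPE('b)"
    and "T > 0"
    and "\<And>n \<omega>. in_CT T (u n \<omega>)"
    and "\<And>\<omega>. in_CT T (v \<omega>)"
    and "\<And>n. u n \<in> borel_measurable M"
    and "\<And>n. integrable M (\<lambda>\<omega>. norm (u n \<omega>))"
    and "v \<in> borel_measurable M"
    and "integrable M (\<lambda>\<omega>. norm (v \<omega>))"
    and "\<exists>C. \<forall>n. (\<integral>\<omega>. norm (u n \<omega>) \<partial>M) \<le> C"
    and "\<And>\<phi>. bounded_linear (\<phi> :: 'b \<Rightarrow> real) \<Longrightarrow>
           (\<lambda>n. \<integral>\<omega>. (SUP t\<in>{0..T}. \<bar>\<phi> (u n \<omega> t - v \<omega> t)\<bar>) \<partial>M) \<longlonglongrightarrow> 0"
    and "(\<lambda>n. \<integral>\<omega>. (SUP t\<in>{0..T}. \<bar>norm (u n \<omega> t) - norm (v \<omega> t)\<bar>) \<partial>M) \<longlonglongrightarrow> 0"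
  shows "\<forall>e>0. (\<lambda>n. measure M {\<omega> \<in> space M. (SUP t\<in>{0..T}. norm (u n \<omega> t - v \<omega> t)) > e})
           \<longlonglongrightarrow> 0"
proof (intro allI impI)
  fix e :: real assume "e > 0"
  interpret weak_norm_convergence M T u v
    using assms(1,4,7-10,12,13) by (intro weak_norm_convergence.intro weak_norm_convergence_axioms.intro) auto
  show "(\<lambda>n. measure M {\<omega> \<in> space M. (SUP t\<in>{0..T}. norm (u n \<omega> t - v \<omega> t)) > e}) \<longlonglongrightarrow> 0"
    by (rule uniform_convergence_in_probability[OF assms(2,3) \<open>e > 0\<close>])
qed

end
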